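(* There is no deterministic algorithm with advice of constant size that performs leader election in all feasible graphs. That is, for every integer $b$, there is no deterministic leader election algorithm with advice together with an assignment of advice strings of length at most $b$ to feasible graphs such that, in every feasible graph, the algorithm with the assigned advice performs leader election (in some finite time).
   Context: A graph is a simple undirected connected finite graph whose nodes have no identifiers; at each node $v$ of degree $d$ the incident edges carry distinct port numbers $0,\dots,d-1$ (local to each node). The truncated view $\mathcal{V}^0(v)$ is a single node; $\mathcal{V}^{l+1}(v)$ is the port-labelled rooted tree whose root has, for every neighbour $v_i$ of $v$, a child $x_i$ joined by an edge carrying the same two port numbers as $\{v,v_i\}$ (the one at $v$ at the root side), and $x_i$ is the root of a copy of $\mathcal{V}^l(v_i)$. The augmented truncated view $\mathcal{B}^l(v)$ is $\mathcal{V}^l(v)$ with each leaf labelled by the degree in $G$ of the node it represents. A graph is feasible if for some $l$ the views $\mathcal{B}^l(v)$ of all nodes are pairwise distinct. Model (LOCAL): synchronous rounds, all nodes start simultaneously, in each round every node exchanges arbitrary messages with all neighbours and computes arbitrarily. Leader election: every node $v$ outputs a sequence $(p_1,q_1,\dots,p_k,q_k)$ of nonnegative integers describing a simple path starting at $v$ whose $i$-th edge has port $p_i$ at its endpoint closer to $v$ and $q_i$ at the other endpoint; all these paths must end at a common node. Advice: an oracle knowing the entire port-labelled graph gives the same binary string to all nodes before the start; its length is the size of advice. In a deterministic algorithm with advice, the actions/output of node $v$ in round $r$ are a function of the advice and of $\mathcal{B}^r(v)$. *)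

theory Defs
  imports Main
begin

text \<open>Nodes are represented by natural numbers (these
names are NOT visible to the algorithm; they only serve to represent the graph).
  port G u w is the port number at u of the edge {u,w} (junk for non-edges).\<close>

record pgraph =
  verts :: "nat set"
  edges :: "(nat \<times> nat) set"
  port  :: "nat \<Rightarrow> nat \<Rightarrow> nat"

definition deg :: "pgraph \<Rightarrow> nat \<Rightarrow> nat" where
  "deg G u = card {w. (u, w) \<in> edges G}"

definition port_graph :: "pgraph \<Rightarrow> bool" where
  "port_graph G \<longleftrightarrow>
     finite (verts G) \<and> verts G \<noteq> {} \<and>
     edges G \<subseteq> verts G \<times> verts G \<and>
     sym (edges G) \<and> irrefl (edges G) \<and>
     (\<forall>u\<in>verts G. \<forall>v\<in>verts G. (u, v) \<in> (edges G)\<^sup>*) \<and>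
     (\<forall>u\<in>verts G. bij_betw (port G u) {w. (u, w) \<in> edges G} {0..<deg G u})"

definition nbr :: "pgraph \<Rightarrow> nat \<Rightarrow> nat \<Rightarrow> nat" where
  "nbr G v p = (THE w. (v, w) \<in> edges G \<and> port G v w = p)"

text \<open>Augmented truncated views: a leaf carries the degree of the node it
represents; an inner node has one child per port of the represented node, listed
in port order, each edge labelled by (port at parent side, port at child side).\<close>
datatype view = VLeaf nat | VNode "(nat \<times> nat \<times> view) list"

fun aview :: "pgraph \<Rightarrow> nat \<Rightarrow> nat \<Rightarrow> view" where
  "aview G 0 v = VLeaf (deg G v)"
| "aview G (Suc l) v =
     VNode (map (\<lambda>p. (p, port G (nbr G v p) v, aview G l (nbr G v p))) [0..<deg G v])"

definition feasible :: "pgraph \<Rightarrow> bool" where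
  "feasible G \<longleftrightarrow> (\<exists>l. inj_on (aview G l) (verts G))"

definition path_output :: "pgraph \<Rightarrow> nat \<Rightarrow> nat list \<Rightarrow> nat \<Rightarrow> bool" where
  "path_output G v out w \<longleftrightarrow>
     even (length out) \<and>
     (\<exists>vs. length vs = length out div 2 + 1 \<and> hd vs = v \<and> last vs = w \<and>
        distinct vs \<and> set vs \<subseteq> verts G \<and>
        (\<forall>i < length out div 2.
           (vs ! i, vs ! Suc i) \<in> edges G \<and>
           port G (vs ! i) (vs ! Suc i) = out ! (2 * i) \<and>
           port G (vs ! Suc i) (vs ! i) = out ! (2 * i + 1)))"

text \<open>A deterministic algorithm with advice: in round r, node v (knowing the
advice and its view B^r(v)) either continues (None) or stops with an output
(Some out). A node outputs at the first round at which it stops.\<close>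
type_synonym algorithm = "bool list \<Rightarrow> view \<Rightarrow> nat list option"

definition elects_leader :: "algorithm \<Rightarrow> bool list \<Rightarrow> pgraph \<Rightarrow> bool" where
  "elects_leader A adv G \<longleftrightarrow>
     (\<exists>ldr\<in>verts G. \<forall>v\<in>verts G. \<exists>r out.
        A adv (aview G r v) = Some out \<and>
        (\<forall>r'<r. A adv (aview G r' v) = None) \<and>
        path_output G v out ldr)"

end

theory Submission
  imports Defs
begin

text \<open>With advice of at most \<open>b\<close> bits, infinitely many feasible graphs must receive the same
  advice. We build a sequence of feasible graphs, cycles decorated with pendant leaves, in which
  graph \<open>j\<close> contains, for every \<open>i < j\<close>, two distinct cycle nodes whose neighbourhoods of
  radius \<open>r\<close> look exactly like that of node 0 of graph \<open>i\<close>, where \<open>r\<close> is the round at which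
  node 0 of graph \<open>i\<close> stops. The graphs are built by induction, so \<open>r\<close> is known when graph
  \<open>j\<close> is constructed. If graphs \<open>i < j\<close> get the same advice, the two nodes of graph \<open>j\<close> stop in
  the same round with the same output; but in a port-labelled graph the output path and its
  endpoint determine the starting node, a contradiction.\<close>

section \<open>Nodes with equal views\<close>

lemma path_output_start_unique:
  assumes G: "port_graph G" and "path_output G u out x" and "path_output G v out x"
  shows "u = v"
proof -
  let ?k = "length out div 2"
  obtain us where us: "length us = ?k + 1" "hd us = u" "last us = x" "set us \<subseteq> verts G"
    "\<forall>i < ?k. (us ! i, us ! Suc i) \<in> edges G \<and> port G (us ! Suc i) (us ! i) = out ! (2 * i + 1)"
    using assms(2) unfolding path_output_def by blast
  obtain vs where vs: "length vs = ?k + 1" "hd vs = v" "last vs = x" "set vs \<subseteq> verts G"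
    "\<forall>i < ?k. (vs ! i, vs ! Suc i) \<in> edges G \<and> port G (vs ! Suc i) (vs ! i) = out ! (2 * i + 1)"
    using assms(3) unfolding path_output_def by blast
  have "sym (edges G)" using G unfolding port_graph_def by blast
  \<comment> \<open>Walking back from the common endpoint, the incoming port numbers determine each predecessor.\<close>
  have "us ! (?k - i) = vs ! (?k - i)" if "i \<le> ?k" for i
    using that
  proof (induction i)
    case 0
    then show ?case using us(1,3) vs(1,3) last_conv_nth[of us] last_conv_nth[of vs] by force
  next
    case (Suc i)
    define m where "m = ?k - Suc i"
    have m: "m < ?k" "Suc m = ?k - i" using Suc.prems unfolding m_def by auto
    let ?y = "us ! Suc m"
    have y: "?y = vs ! Suc m" using Suc m by simp
    have "?y \<in> verts G" using us(1,4) m by auto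
    then have "inj_on (port G ?y) {w. (?y, w) \<in> edges G}"
      using G unfolding port_graph_def bij_betw_def by blast
    moreover have "(?y, us ! m) \<in> edges G" "(?y, vs ! m) \<in> edges G"
      using us(5) vs(5) m y \<open>sym (edges G)\<close> by (metis symD)+
    moreover have "port G ?y (us ! m) = port G ?y (vs ! m)" using us(5) vs(5) m y by metis
    ultimately show ?case unfolding m_def[symmetric] by (auto dest: inj_onD)
  qed
  from this[of ?k] show "u = v" using us(1,2) vs(1,2) hd_conv_nth[of us] hd_conv_nth[of vs] by force
qed

lemma first_output_eq:
  fixes r r' R :: nat
  assumes "f r = Some out" "\<forall>k<r. f k = None" "g r' = Some out'" "\<forall>k<r'. g k = None"
    and "f R \<noteq> None" and "\<forall>k\<le>R. f k = g k"
  shows "out = out'"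
proof -
  have "r \<le> R" using assms(1,2,5) by (metis not_le)
  moreover have "r' \<le> R" using assms(4-6) by (metis not_le order_refl)
  ultimately have "r = r'" using assms(1-4,6)
    by (metis linorder_neqE_nat option.distinct(1) less_imp_le order.trans)
  then show ?thesis using assms(1,3,6) \<open>r \<le> R\<close> by simp
qed

lemma elects_leader_indistinguishable:
  assumes "port_graph G" "elects_leader A s G" "x \<in> verts G" "y \<in> verts G"
    and "A s (aview G R x) \<noteq> None" and "\<forall>r\<le>R. aview G r x = aview G r y"
  shows "x = y"
proof -
  obtain ldr rx outx ry outy where
    x: "A s (aview G rx x) = Some outx" "\<forall>k<rx. A s (aview G k x) = None" "path_output G x outx ldr" and
    y: "A s (aview G ry y) = Some outy" "\<forall>k<ry. A s (aview G k y) = None" "path_output G y outy ldr"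
    using assms(2-4) unfolding elects_leader_def by metis
  have "outx = outy"
    by (rule first_output_eq[where f = "\<lambda>k. A s (aview G k x)" and g = "\<lambda>k. A s (aview G k y)" and R = R])
      (use x y assms(5,6) in auto)
  then show ?thesis using path_output_start_unique[OF assms(1) x(3)] y(3) by simp
qed

section \<open>Decorated cycles\<close>

definition cyc_succ :: "nat \<Rightarrow> nat \<Rightarrow> nat" where
  "cyc_succ n p = (if Suc p = n then 0 else Suc p)"

definition cyc_pred :: "nat \<Rightarrow> nat \<Rightarrow> nat" where
  "cyc_pred n p = (if p = 0 then n - 1 else p - 1)"

lemma cyc_succ_less: "p < n \<Longrightarrow> cyc_succ n p < n"
  by (auto simp: cyc_succ_def)

lemma cyc_pred_less: "p < n \<Longrightarrow> cyc_pred n p < n"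
  by (auto simp: cyc_pred_def)

lemma cyc_succ_pred: "p < n \<Longrightarrow> cyc_succ n (cyc_pred n p) = p"
  by (auto simp: cyc_pred_def cyc_succ_def)

lemma cyc_succ_eq_iff: "p < n \<Longrightarrow> x < n \<Longrightarrow> p = cyc_succ n x \<longleftrightarrow> x = cyc_pred n p"
  by (auto simp: cyc_pred_def cyc_succ_def)

lemma cyc_succ_neq_pred: "3 \<le> n \<Longrightarrow> p < n \<Longrightarrow> cyc_succ n p \<noteq> cyc_pred n p"
  by (auto simp: cyc_pred_def cyc_succ_def)

lemma cyc_succ_neq: "2 \<le> n \<Longrightarrow> p < n \<Longrightarrow> cyc_succ n p \<noteq> p"
  by (auto simp: cyc_succ_def)

lemma cyc_succ_succ_neq: "3 \<le> n \<Longrightarrow> p < n \<Longrightarrow> cyc_succ n (cyc_succ n p) \<noteq> p"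
  by (auto simp: cyc_succ_def)

lemma int_cyc_succ: "p < n \<Longrightarrow> int (cyc_succ n p) = (int p + 1) mod int n"
  by (cases "Suc p = n") (auto simp: cyc_succ_def ac_simps)

lemma int_cyc_pred: "p < n \<Longrightarrow> int (cyc_pred n p) = (int p - 1) mod int n"
  by (cases "p = 0") (auto simp: cyc_pred_def zmod_minus1 of_nat_diff)

text \<open>The cycle \<open>0, \<dots>, n - 1\<close> (with \<open>n = length w\<close>) in which node \<open>p\<close> carries \<open>w ! p\<close>
  pendant leaves, the \<open>j\<close>-th one being the vertex \<open>n * Suc j + p\<close>. At a cycle node, port 0
  leads forward, port 1 backward and port \<open>j + 2\<close> to the \<open>j\<close>-th leaf.\<close>
definition decorated_cycle :: "nat list \<Rightarrow> pgraph" where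
  "decorated_cycle w = (let n = length w;
     E = {(p, cyc_succ n p) | p. p < n} \<union> {(p, n * Suc j + p) | p j. p < n \<and> j < w ! p} in
     \<lparr>verts = {p. p < n} \<union> {n * Suc j + p | p j. p < n \<and> j < w ! p},
      edges = E \<union> E\<inverse>,
      port = \<lambda>u v. if u < n then (if v = cyc_succ n u then 0 else if v < n then 1 else v div n + 1)
                   else 0\<rparr>)"

lemma verts_decorated_cycle:
  "x \<in> verts (decorated_cycle w) \<longleftrightarrow>
     x < length w \<or> (\<exists>p j. p < length w \<and> j < w ! p \<and> x = length w * Suc j + p)"
  by (auto simp: decorated_cycle_def Let_def)

lemma edges_decorated_cycle:
  "(u, v) \<in> edges (decorated_cycle w) \<longleftrightarrow>
     (u < length w \<and> v = cyc_succ (length w) u) \<or> (v < length w \<and> u = cyc_succ (length w) v) \<or>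
     (\<exists>j. u < length w \<and> j < w ! u \<and> v = length w * Suc j + u) \<or>
     (\<exists>j. v < length w \<and> j < w ! v \<and> u = length w * Suc j + v)"
  by (auto simp: decorated_cycle_def Let_def)

lemma port_decorated_cycle:
  "port (decorated_cycle w) u v = (if u < length w then (if v = cyc_succ (length w) u then 0
     else if v < length w then 1 else v div length w + 1) else 0)"
  by (simp add: decorated_cycle_def Let_def)

lemma leaf_vertex_eq_iff:
  fixes p q n :: nat
  assumes "p < n" "q < n"
  shows "n * a + p = n * b + q \<longleftrightarrow> a = b \<and> p = q"
proof
  assume "n * a + p = n * b + q"
  then have "(n * a + p) mod n = (n * b + q) mod n" "(n * a + p) div n = (n * b + q) div n" by auto
  then show "a = b \<and> p = q" using assms by simp
qed auto

lemma leaf_vertex_div [simp]: "(p::nat) < n \<Longrightarrow> (n + n * j + p) div n = Suc j"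
  by (metis add.commute div_less div_mult_self2 mult_Suc_right not_less_zero add_0)

lemma nbr_port:
  assumes "port_graph G" "v \<in> verts G" "(v, x) \<in> edges G"
  shows "nbr G v (port G v x) = x"
  unfolding nbr_def
proof (rule the_equality)
  have "inj_on (port G v) {w. (v, w) \<in> edges G}"
    using assms(1,2) unfolding port_graph_def bij_betw_def by blast
  then show "y = x" if "(v, y) \<in> edges G \<and> port G v y = port G v x" for y
    using that assms(3) by (auto dest: inj_onD)
qed (use assms in simp)

text \<open>The depth-\<open>R\<close> view of a node of a decorated cycle whose leaf counts, read along the
  cycle starting from the node, form the two-sided sequence \<open>f\<close>.\<close>
fun seq_view :: "(int \<Rightarrow> nat) \<Rightarrow> nat \<Rightarrow> view" where
  "seq_view f 0 = VLeaf (2 + f 0)"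
| "seq_view f (Suc 0) = VNode ([(0, 1, seq_view (\<lambda>t. f (t + 1)) 0), (1, 0, seq_view (\<lambda>t. f (t - 1)) 0)]
      @ map (\<lambda>j. (Suc (Suc j), 0, VLeaf 1)) [0..<f 0])"
| "seq_view f (Suc (Suc R)) = VNode
     ([(0, 1, seq_view (\<lambda>t. f (t + 1)) (Suc R)), (1, 0, seq_view (\<lambda>t. f (t - 1)) (Suc R))]
      @ map (\<lambda>j. (Suc (Suc j), 0, VNode [(0, Suc (Suc j), seq_view f R)])) [0..<f 0])"

definition cyclic_seq :: "nat list \<Rightarrow> nat \<Rightarrow> int \<Rightarrow> nat" where
  "cyclic_seq w p t = w ! nat ((int p + t) mod int (length w))"

lemma cyclic_seq_0: "p < length w \<Longrightarrow> cyclic_seq w p 0 = w ! p"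
  by (simp add: cyclic_seq_def)

lemma cyclic_seq_of_nat: "cyclic_seq w p (int k) = w ! ((p + k) mod length w)"
  unfolding cyclic_seq_def by (simp add: nat_mod_distrib nat_add_distrib flip: of_nat_add of_nat_mod)

lemma cyclic_seq_shift_succ:
  "p < length w \<Longrightarrow> (\<lambda>t. cyclic_seq w p (t + 1)) = cyclic_seq w (cyc_succ (length w) p)"
  unfolding cyclic_seq_def by (auto simp: int_cyc_succ mod_add_right_eq ac_simps)

lemma cyclic_seq_shift_pred:
  "p < length w \<Longrightarrow> (\<lambda>t. cyclic_seq w p (t - 1)) = cyclic_seq w (cyc_pred (length w) p)"
  unfolding cyclic_seq_def fun_eq_iff by (simp add: int_cyc_pred mod_add_right_eq algebra_simps)

lemma upt_two_plus: "[0..<2 + m] = [0, 1] @ map (\<lambda>j. Suc (Suc j)) [0..<m]"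
  by (induction m) (auto simp: numeral_2_eq_2)

lemma seq_view_cong: "(\<And>t. \<bar>t\<bar> \<le> int R \<Longrightarrow> f t = g t) \<Longrightarrow> seq_view f R = seq_view g R"
proof (induction R arbitrary: f g rule: less_induct)
  case (less R)
  show ?case
  proof (cases R)
    case 0 then show ?thesis using less.prems[of 0] by simp
  next
    case (Suc R')
    have "seq_view (\<lambda>t. f (t + 1)) R' = seq_view (\<lambda>t. g (t + 1)) R'"
      "seq_view (\<lambda>t. f (t - 1)) R' = seq_view (\<lambda>t. g (t - 1)) R'"
      by (rule less.IH; use Suc less.prems in auto)+
    moreover have "f 0 = g 0" using less.prems[of 0] by simp
    moreover have "seq_view f (R' - 1) = seq_view g (R' - 1)"
      by (rule less.IH) (use Suc less.prems in auto)
    ultimately show ?thesis using Suc by (cases R') auto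
  qed
qed

fun view_degree :: "view \<Rightarrow> nat" where
  "view_degree (VLeaf d) = d"
| "view_degree (VNode xs) = length xs"

fun view_child0 :: "view \<Rightarrow> view" where
  "view_child0 (VNode (x # xs)) = snd (snd x)"
| "view_child0 _ = VLeaf 0"

lemma view_degree_aview: "view_degree (aview G R v) = deg G v"
  by (cases R) auto

lemma view_degree_seq_view: "view_degree (seq_view f R) = 2 + f 0"
  by (cases R; cases "R - 1") auto

lemma view_child0_pow_seq_view:
  "k \<le> R \<Longrightarrow> (view_child0 ^^ k) (seq_view f R) = seq_view (\<lambda>t. f (t + int k)) (R - k)"
proof (induction k)
  case (Suc k)
  then have "R - k = Suc (R - Suc k)" by simp
  moreover have "view_child0 (seq_view f (Suc R')) = seq_view (\<lambda>t. f (t + 1)) R'" for f R'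
    by (cases R') auto
  ultimately show ?case using Suc by (simp add: ac_simps)
qed simp

text \<open>Following port 0 for \<open>k\<close> steps and reading off the degree recovers \<open>f k\<close>.\<close>
lemma seq_view_eq_imp_eq:
  assumes "seq_view f R = seq_view g R" "k \<le> R"
  shows "f (int k) = g (int k)"
proof -
  have "view_degree ((view_child0 ^^ k) (seq_view f R)) = view_degree ((view_child0 ^^ k) (seq_view g R))"
    using assms(1) by simp
  then show ?thesis using view_child0_pow_seq_view[OF assms(2)] view_degree_seq_view by simp
qed

lemma cyclic_seq_eq_imp_start_eq:
  assumes uq: "\<And>q. q < length w \<Longrightarrow> w ! q = c \<longleftrightarrow> q = u" and u: "u < length w"
    and p: "p < length w" and q: "q < length w"
    and eq: "\<forall>k < length w. cyclic_seq w p (int k) = cyclic_seq w q (int k)"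
  shows "p = q"
proof -
  let ?n = "length w"
  define k where "k = (u + ?n - p) mod ?n"
  have "?n > 0" using u by linarith
  then have "k < ?n" unfolding k_def by simp
  have pk: "(p + k) mod ?n = u" unfolding k_def using p u
    by (metis add.commute add_diff_inverse_nat add_lessD1 mod_add_right_eq
        mod_add_self1 mod_less order_less_imp_not_less)
  have "w ! ((q + k) mod ?n) = w ! ((p + k) mod ?n)"
    using spec[OF eq, of k] \<open>k < ?n\<close> unfolding cyclic_seq_of_nat by simp
  then have "w ! ((q + k) mod ?n) = c" using pk uq u by simp
  then have "(q + k) mod ?n = u" using uq[of "(q + k) mod ?n"] \<open>?n > 0\<close> by simp
  then have "(p + k) mod ?n = (q + k) mod ?n" using pk by simp
  then have "(int p + int k) mod int ?n = (int q + int k) mod int ?n"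
    by (metis of_nat_add of_nat_mod)
  then have "(int p + int k - int k) mod int ?n = (int q + int k - int k) mod int ?n"
    by (rule mod_diff_cong) simp
  then show "p = q" using p q by simp
qed

context
  fixes w :: "nat list"
  assumes three_le_length: "3 \<le> length w"
begin

lemma decorated_cycle_neighbours:
  assumes "p < length w"
  shows "{x. (p, x) \<in> edges (decorated_cycle w)} =
    {cyc_succ (length w) p, cyc_pred (length w) p} \<union> {length w * Suc j + p | j. j < w ! p}"
  using assms three_le_length cyc_succ_eq_iff[of p "length w"] cyc_succ_pred[of p "length w"]
    cyc_pred_less[of p "length w"] leaf_vertex_eq_iff[of p "length w"]
  by (auto simp: edges_decorated_cycle cyc_succ_less)

lemma decorated_cycle_leaf_neighbours:
  assumes "p < length w" "j < w ! p"
  shows "{x. (length w * Suc j + p, x) \<in> edges (decorated_cycle w)} = {p}"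
  using assms leaf_vertex_eq_iff[of p "length w"] cyc_succ_less[of _ "length w"]
  by (auto simp: edges_decorated_cycle) (metis add_lessD1 less_not_refl2)

lemma port_decorated_cycle_bij:
  assumes "p < length w"
  shows "bij_betw (port (decorated_cycle w) p) {x. (p, x) \<in> edges (decorated_cycle w)} {0..<2 + w ! p}"
proof -
  let ?n = "length w"
  let ?N = "{cyc_succ ?n p, cyc_pred ?n p} \<union> {?n * Suc j + p | j. j < w ! p}"
  let ?g = "\<lambda>k. if k = 0 then cyc_succ ?n p else if k = 1 then cyc_pred ?n p else ?n * Suc (k - 2) + p"
  have succ_pred: "cyc_succ ?n p \<noteq> cyc_pred ?n p" "cyc_pred ?n p < ?n" "cyc_succ ?n p < ?n"
    using assms three_le_length cyc_succ_neq_pred cyc_pred_less cyc_succ_less by auto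
  have "?g ` {0..<2 + w ! p} \<subseteq> ?N"
  proof
    fix y assume "y \<in> ?g ` {0..<2 + w ! p}"
    then obtain k where "k \<in> {0..<2 + w ! p}" "y = ?g k" by (rule imageE)
    then show "y \<in> ?N" by (cases "k \<ge> 2") (auto intro!: exI[of _ "k - 2"])
  qed
  then show ?thesis unfolding decorated_cycle_neighbours[OF assms]
    by (intro bij_betw_byWitness[where f' = ?g])
      (use assms succ_pred in \<open>auto simp: port_decorated_cycle\<close>)
qed

lemma deg_decorated_cycle: "p < length w \<Longrightarrow> deg (decorated_cycle w) p = 2 + w ! p"
  unfolding deg_def using bij_betw_same_card[OF port_decorated_cycle_bij] by simp

lemma deg_decorated_cycle_leaf:
  "p < length w \<Longrightarrow> j < w ! p \<Longrightarrow> deg (decorated_cycle w) (length w * Suc j + p) = 1"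
  unfolding deg_def using decorated_cycle_leaf_neighbours by simp

lemma port_graph_decorated_cycle: "port_graph (decorated_cycle w)"
proof -
  let ?n = "length w" and ?G = "decorated_cycle w"
  let ?E = "edges ?G"
  have "verts ?G \<subseteq> {..< ?n * Suc (sum_list w) + ?n}"
  proof
    fix x assume "x \<in> verts ?G"
    then consider "x < ?n" | p j where "p < ?n" "j < w ! p" "x = ?n * Suc j + p"
      unfolding verts_decorated_cycle by blast
    then show "x \<in> {..< ?n * Suc (sum_list w) + ?n}"
    proof cases
      case 2
      have "j \<le> sum_list w" using 2 elem_le_sum_list[of p w] by linarith
      then have "?n * j \<le> ?n * sum_list w" by (rule mult_le_mono2)
      then have "?n * j + (?n + p) < ?n * sum_list w + (?n + ?n)" using 2(1) by linarith
      then show ?thesis using 2(3) by simp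
    qed simp
  qed
  then have fin: "finite (verts ?G)" by (rule finite_subset) simp
  have "0 \<in> verts ?G" using three_le_length by (auto simp: verts_decorated_cycle)
  have sub: "?E \<subseteq> verts ?G \<times> verts ?G"
    by (rule subrelI) (auto simp only: edges_decorated_cycle mem_Times_iff verts_decorated_cycle
      fst_conv snd_conv cyc_succ_less)
  have sym: "sym ?E" unfolding sym_def edges_decorated_cycle by blast
  have irr: "irrefl ?E" using three_le_length cyc_succ_neq[of ?n]
    unfolding irrefl_def edges_decorated_cycle by fastforce
  have cycle_reach: "(0, p) \<in> ?E\<^sup>*" if "p < ?n" for p
    using that
  proof (induction p)
    case (Suc p)
    then have "(p, Suc p) \<in> ?E" by (simp add: edges_decorated_cycle cyc_succ_def)
    with Suc show ?case by (meson Suc_lessD rtrancl.rtrancl_into_rtrancl)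
  qed simp
  have reach: "(0, x) \<in> ?E\<^sup>*" if "x \<in> verts ?G" for x
  proof -
    from that consider "x < ?n" | p j where "p < ?n" "j < w ! p" "x = ?n * Suc j + p"
      unfolding verts_decorated_cycle by blast
    then show ?thesis
    proof cases
      case 2
      then have "(p, x) \<in> ?E" by (auto simp: edges_decorated_cycle)
      then show ?thesis using cycle_reach[OF 2(1)] by (meson rtrancl.rtrancl_into_rtrancl)
    qed (use cycle_reach in blast)
  qed
  have conn: "\<forall>u\<in>verts ?G. \<forall>v\<in>verts ?G. (u, v) \<in> ?E\<^sup>*"
    using reach sym_rtrancl[OF sym] by (meson rtrancl_trans symD)
  have bij: "\<forall>u\<in>verts ?G. bij_betw (port ?G u) {x. (u, x) \<in> ?E} {0..<deg ?G u}"
  proof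
    fix x assume "x \<in> verts ?G"
    then consider "x < ?n" | p j where "p < ?n" "j < w ! p" "x = ?n * Suc j + p"
      unfolding verts_decorated_cycle by blast
    then show "bij_betw (port ?G x) {y. (x, y) \<in> ?E} {0..<deg ?G x}"
    proof cases
      case 1 then show ?thesis using port_decorated_cycle_bij deg_decorated_cycle by simp
    next
      case 2
      then show ?thesis
        using decorated_cycle_leaf_neighbours deg_decorated_cycle_leaf
        by (auto simp: bij_betw_def port_decorated_cycle)
    qed
  qed
  show ?thesis unfolding port_graph_def using fin \<open>0 \<in> verts ?G\<close> sub sym irr conn bij by blast
qed

lemma nbr_decorated_cycle:
  assumes "p < length w"
  shows "nbr (decorated_cycle w) p 0 = cyc_succ (length w) p"
    and "nbr (decorated_cycle w) p 1 = cyc_pred (length w) p"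
    and "j < w ! p \<Longrightarrow> nbr (decorated_cycle w) p (Suc (Suc j)) = length w * Suc j + p"
    and "j < w ! p \<Longrightarrow> nbr (decorated_cycle w) (length w * Suc j + p) 0 = p"
proof -
  let ?G = "decorated_cycle w" and ?n = "length w"
  have p: "p \<in> verts ?G" using assms by (simp add: verts_decorated_cycle)
  have succ_pred: "cyc_succ ?n p \<noteq> cyc_pred ?n p" "cyc_pred ?n p < ?n" "cyc_succ ?n p < ?n"
    "cyc_succ ?n (cyc_pred ?n p) = p"
    using assms three_le_length cyc_succ_neq_pred cyc_pred_less cyc_succ_less cyc_succ_pred by auto
  show "nbr ?G p 0 = cyc_succ ?n p"
    using nbr_port[OF port_graph_decorated_cycle p, of "cyc_succ ?n p"] assms
    by (simp add: edges_decorated_cycle port_decorated_cycle)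
  show "nbr ?G p 1 = cyc_pred ?n p"
    using nbr_port[OF port_graph_decorated_cycle p, of "cyc_pred ?n p"] assms succ_pred
    by (simp add: edges_decorated_cycle port_decorated_cycle)
  assume j: "j < w ! p"
  then show "nbr ?G p (Suc (Suc j)) = ?n * Suc j + p"
    using nbr_port[OF port_graph_decorated_cycle p, of "?n * Suc j + p"] assms succ_pred
    by (auto simp: edges_decorated_cycle port_decorated_cycle)
  have "?n * Suc j + p \<in> verts ?G" using assms j by (auto simp: verts_decorated_cycle)
  then show "nbr ?G (?n * Suc j + p) 0 = p"
    using nbr_port[OF port_graph_decorated_cycle, of "?n * Suc j + p" p] assms j
    by (auto simp: edges_decorated_cycle port_decorated_cycle)
qed

lemma aview_decorated_cycle_leaf:
  "p < length w \<Longrightarrow> j < w ! p \<Longrightarrow> aview (decorated_cycle w) (Suc R) (length w * Suc j + p) =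
     VNode [(0, Suc (Suc j), aview (decorated_cycle w) R p)]"
  using deg_decorated_cycle_leaf nbr_decorated_cycle(4) cyc_succ_less[of p "length w"]
  by (simp add: port_decorated_cycle)

lemma aview_decorated_cycle_node:
  assumes "p < length w"
  shows "aview (decorated_cycle w) (Suc R) p = VNode
    ([(0, 1, aview (decorated_cycle w) R (cyc_succ (length w) p)),
      (1, 0, aview (decorated_cycle w) R (cyc_pred (length w) p))] @
     map (\<lambda>j. (Suc (Suc j), 0, aview (decorated_cycle w) R (length w * Suc j + p))) [0..<w ! p])"
proof -
  let ?G = "decorated_cycle w" and ?n = "length w"
  define F where "F = (\<lambda>k. (k, port ?G (nbr ?G p k) p, aview ?G R (nbr ?G p k)))"
  have "aview ?G (Suc R) p = VNode (map F ([0, 1] @ map (\<lambda>j. Suc (Suc j)) [0..<w ! p]))"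
    unfolding F_def aview.simps deg_decorated_cycle[OF assms] upt_two_plus ..
  moreover have "F 0 = (0, 1, aview ?G R (cyc_succ ?n p))" "F 1 = (1, 0, aview ?G R (cyc_pred ?n p))"
    unfolding F_def nbr_decorated_cycle(1,2)[OF assms]
    using assms three_le_length cyc_succ_succ_neq[of ?n p] cyc_succ_less cyc_pred_less cyc_succ_pred
    by (auto simp: port_decorated_cycle)
  moreover have "map (F \<circ> (\<lambda>j. Suc (Suc j))) [0..<w ! p] =
      map (\<lambda>j. (Suc (Suc j), 0, aview ?G R (?n * Suc j + p))) [0..<w ! p]"
    by (rule map_cong) (use assms in \<open>auto simp: F_def nbr_decorated_cycle port_decorated_cycle\<close>)
  ultimately show ?thesis by simp
qed

lemma aview_decorated_cycle:
  "p < length w \<Longrightarrow> aview (decorated_cycle w) R p = seq_view (cyclic_seq w p) R"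
proof (induction R arbitrary: p rule: less_induct)
  case (less R)
  let ?G = "decorated_cycle w" and ?n = "length w"
  show ?case
  proof (cases R)
    case 0 then show ?thesis using less.prems deg_decorated_cycle by (simp add: cyclic_seq_0)
  next
    case (Suc R')
    have neighbours:
      "aview ?G R' (cyc_succ ?n p) = seq_view (\<lambda>t. cyclic_seq w p (t + 1)) R'"
      "aview ?G R' (cyc_pred ?n p) = seq_view (\<lambda>t. cyclic_seq w p (t - 1)) R'"
      using less Suc cyc_succ_less cyc_pred_less cyclic_seq_shift_succ cyclic_seq_shift_pred by auto
    show ?thesis
    proof (cases R')
      case 0
      then show ?thesis
        unfolding \<open>R = Suc R'\<close> aview_decorated_cycle_node[OF less.prems] neighbours
        using less.prems deg_decorated_cycle_leaf by (simp add: cyclic_seq_0)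
    next
      case (Suc R'')
      then have "aview ?G R'' p = seq_view (cyclic_seq w p) R''"
        using less \<open>R = Suc R'\<close> by simp
      then show ?thesis
        unfolding \<open>R = Suc R'\<close> aview_decorated_cycle_node[OF less.prems] neighbours
        using Suc less.prems aview_decorated_cycle_leaf by (simp add: cyclic_seq_0)
    qed
  qed
qed

lemma feasible_decorated_cycle:
  assumes uq: "\<And>q. q < length w \<Longrightarrow> w ! q = c \<longleftrightarrow> q = u" and u: "u < length w"
  shows "feasible (decorated_cycle w)"
  unfolding feasible_def
proof (intro exI inj_onI)
  let ?G = "decorated_cycle w" and ?n = "length w"
  fix x y assume x: "x \<in> verts ?G" and y: "y \<in> verts ?G"
    and eq: "aview ?G (Suc ?n) x = aview ?G (Suc ?n) y"
  have cycle_inj: "p = q" if "p < ?n" "q < ?n" "?n \<le> R" "aview ?G R p = aview ?G R q" for p q R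
    using cyclic_seq_eq_imp_start_eq[OF uq u that(1,2)] seq_view_eq_imp_eq[of _ R] that aview_decorated_cycle
    by simp
  have "view_degree (aview ?G (Suc ?n) x) = view_degree (aview ?G (Suc ?n) y)" using eq by simp
  then have deg_eq: "deg ?G x = deg ?G y" by (simp add: view_degree_aview)
  from x y consider "x < ?n" "y < ?n"
    | p j where "p < ?n" "j < w ! p" "x = ?n * Suc j + p" "y < ?n"
    | p j where "p < ?n" "j < w ! p" "y = ?n * Suc j + p" "x < ?n"
    | p j p' j' where "p < ?n" "j < w ! p" "x = ?n * Suc j + p"
        "p' < ?n" "j' < w ! p'" "y = ?n * Suc j' + p'"
    unfolding verts_decorated_cycle by blast
  then show "x = y"
  proof cases
    case 1
    then show ?thesis using cycle_inj[of x y "Suc ?n"] eq by simp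
  next
    case 2 then show ?thesis using deg_eq deg_decorated_cycle deg_decorated_cycle_leaf by simp
  next
    case 3 then show ?thesis using deg_eq deg_decorated_cycle deg_decorated_cycle_leaf by simp
  next
    case 4
    then have "j = j'" "aview ?G ?n p = aview ?G ?n p'"
      using eq aview_decorated_cycle_leaf by simp_all
    then show ?thesis using 4 cycle_inj[of p p' ?n] by simp
  qed
qed

end

section \<open>Words with repeated blocks\<close>

lemma length_concat_replicate [simp]: "length (concat (replicate M v)) = M * length v"
  by (induction M) auto

lemma nth_concat_replicate:
  "m < M * length v \<Longrightarrow> concat (replicate M v) ! m = v ! (m mod length v)"
proof (induction M arbitrary: m)
  case (Suc M)
  show ?case
  proof (cases "m < length v")
    case False
    then have "m - length v < M * length v" "(m - length v) mod length v = m mod length v"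
      using Suc.prems by (simp_all add: le_mod_geq)
    then show ?thesis using Suc.IH False by (simp add: nth_append)
  qed (simp add: nth_append)
qed simp

lemma cyclic_seq_concat_replicate:
  assumes "W = pre @ concat (replicate M v) @ rest"
    and "0 \<le> int (a * length v) + t" "int (a * length v) + t < int (M * length v)"
  shows "cyclic_seq W (length pre + a * length v) t = cyclic_seq v 0 t"
proof -
  define m where "m = nat (int (a * length v) + t)"
  have m: "int m = int (a * length v) + t" "m < M * length v" using assms(2,3) unfolding m_def by linarith+
  have "int (length pre + a * length v) + t = int (length pre + m)" using m(1) by simp
  then have "cyclic_seq W (length pre + a * length v) t = W ! ((length pre + m) mod length W)"
    unfolding cyclic_seq_def by (metis nat_int of_nat_mod)
  also have "\<dots> = W ! (length pre + m)" using assms(1) m(2) by simp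
  also have "\<dots> = v ! (m mod length v)" using assms(1) m(2) by (simp add: nth_append nth_concat_replicate)
  also have "m mod length v = nat (t mod int (length v))"
    using m(1) by (metis mod_mult_self3 nat_int of_nat_mod mult.commute of_nat_mult add.commute)
  finally show ?thesis by (simp add: cyclic_seq_def)
qed

text \<open>Each earlier word \<open>v\<close> is repeated \<open>2 S + 4\<close> times, with \<open>S \<ge> T v\<close>, so that word \<open>k + 1\<close>
  contains positions whose radius-\<open>T v\<close> window matches position 0 of \<open>v\<close>; the final marker
  \<open>k + 2\<close> occurs nowhere else and makes the decorated cycle feasible.\<close>
fun mimic_words :: "(nat list \<Rightarrow> nat) \<Rightarrow> nat \<Rightarrow> nat list list" where
  "mimic_words T 0 = [[0, 0, 1]]"
| "mimic_words T (Suc k) = mimic_words T k @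
     [concat (map (\<lambda>v. concat (replicate (2 * sum_list (map T (mimic_words T k)) + 4) v))
        (mimic_words T k)) @ [k + 2]]"

definition mimic_word :: "(nat list \<Rightarrow> nat) \<Rightarrow> nat \<Rightarrow> nat list" where
  "mimic_word T k = mimic_words T k ! k"

lemma length_mimic_words: "length (mimic_words T k) = Suc k"
  by (induction k) auto

lemma nth_mimic_words: "i \<le> k \<Longrightarrow> mimic_words T k ! i = mimic_word T i"
  by (induction k) (auto simp: mimic_word_def nth_append length_mimic_words le_Suc_eq)

lemma mimic_words_conv_map: "mimic_words T k = map (mimic_word T) [0..<Suc k]"
  by (rule nth_equalityI) (auto simp: length_mimic_words nth_mimic_words simp del: upt_Suc)

lemma mimic_word_Suc:
  "mimic_word T (Suc k) =
     concat (map (\<lambda>v. concat (replicate (2 * sum_list (map T (mimic_words T k)) + 4) v))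
       (mimic_words T k)) @ [k + 2]"
  by (simp add: mimic_word_def nth_append length_mimic_words)

lemma set_mimic_word_Suc_prefix:
  "mimic_word T (Suc k) = C @ [k + 2] \<Longrightarrow> set C \<subseteq> (\<Union>i\<le>k. set (mimic_word T i))"
  by (auto simp: mimic_word_Suc mimic_words_conv_map less_Suc_eq_le simp del: upt_Suc) blast

lemma mimic_word_Suc_snoc: "\<exists>C. mimic_word T (Suc k) = C @ [k + 2]"
  by (simp add: mimic_word_Suc)

lemma set_mimic_word_le: "x \<in> set (mimic_word T k) \<Longrightarrow> x \<le> k + 1"
proof (induction k arbitrary: x rule: less_induct)
  case (less k)
  show ?case
  proof (cases k)
    case 0 then show ?thesis using less.prems by (auto simp: mimic_word_def)
  next
    case (Suc k')
    obtain C where C: "mimic_word T k = C @ [k' + 2]" using mimic_word_Suc_snoc Suc by blast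
    show ?thesis
    proof (cases "x \<in> set C")
      case True
      then obtain i where "i \<le> k'" "x \<in> set (mimic_word T i)"
        using set_mimic_word_Suc_prefix C Suc by blast
      then show ?thesis using less.IH[of i x] Suc by simp
    qed (use less.prems C Suc in simp)
  qed
qed

lemma three_le_length_mimic_word: "3 \<le> length (mimic_word T k)"
proof (cases k)
  case (Suc k')
  define M where "M = 2 * sum_list (map T (mimic_words T k')) + 4"
  obtain ws where ws: "mimic_words T k' = mimic_word T 0 # ws"
    by (simp add: mimic_words_conv_map upt_conv_Cons del: upt_Suc)
  have "mimic_word T k = concat (replicate M (mimic_word T 0)) @
      concat (map (\<lambda>v. concat (replicate M v)) ws) @ [k' + 2]"
    unfolding Suc mimic_word_Suc M_def ws by simp
  then show ?thesis by (simp add: M_def mimic_word_def)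
qed (simp add: mimic_word_def)

lemma mimic_word_eq_marker_iff:
  assumes "q < length (mimic_word T k)"
  shows "mimic_word T k ! q = k + 1 \<longleftrightarrow> q = length (mimic_word T k) - 1"
proof (cases k)
  case 0
  then show ?thesis using assms by (auto simp: mimic_word_def less_Suc_eq nth_Cons split: nat.splits)
next
  case (Suc k')
  obtain C where C: "mimic_word T k = C @ [k + 1]" using mimic_word_Suc_snoc Suc by fastforce
  have "x \<le> k" if "x \<in> set C" for x
    using that set_mimic_word_Suc_prefix[of T k' C] C Suc set_mimic_word_le by fastforce
  moreover have "q < length C \<or> q = length C" using assms C by auto
  ultimately show ?thesis using C by (auto simp: nth_append) (metis nth_mem Suc_n_not_le_n)
qed

text \<open>The two positions lie in the middle of the run of \<open>2 S + 4\<close> copies of word \<open>i\<close>, at distance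
  more than \<open>S \<ge> T (mimic_word T i)\<close> from both ends of the run.\<close>
lemma mimic_word_two_copies:
  assumes "i < j"
  shows "\<exists>u u'. u < length (mimic_word T j) \<and> u' < length (mimic_word T j) \<and> u \<noteq> u' \<and>
    (\<forall>t. \<bar>t\<bar> \<le> int (T (mimic_word T i)) \<longrightarrow>
       cyclic_seq (mimic_word T j) u t = cyclic_seq (mimic_word T i) 0 t \<and>
       cyclic_seq (mimic_word T j) u' t = cyclic_seq (mimic_word T i) 0 t)"
proof -
  obtain k where j: "j = Suc k" and "i \<le> k" using assms by (cases j) auto
  define L where "L = mimic_words T k"
  define S where "S = sum_list (map T L)"
  define v where "v = mimic_word T i"
  let ?f = "\<lambda>v. concat (replicate (2 * S + 4) v)"
  define pre where "pre = concat (map ?f (take i L))"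
  define rest where "rest = concat (map ?f (drop (Suc i) L)) @ [k + 2]"
  have "i < length L" "L ! i = v"
    using \<open>i \<le> k\<close> by (simp_all add: L_def v_def length_mimic_words nth_mimic_words)
  then have "concat (map ?f L) = pre @ ?f v @ concat (map ?f (drop (Suc i) L))"
    unfolding pre_def by (subst id_take_nth_drop[of i L]) simp_all
  then have W: "mimic_word T j = pre @ concat (replicate (2 * S + 4) v) @ rest"
    by (simp add: j mimic_word_Suc rest_def S_def L_def)
  have "T v \<le> S"
  proof -
    have "T v \<in> set (map T L)" using \<open>i < length L\<close> \<open>L ! i = v\<close> by (metis length_map nth_map nth_mem)
    then show ?thesis unfolding S_def by (rule member_le_sum_list) simp
  qed
  have nv: "1 \<le> length v" using three_le_length_mimic_word[of T i] by (simp add: v_def)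
  have window: "cyclic_seq (mimic_word T j) (length pre + a * length v) t = cyclic_seq v 0 t"
    if "S + 1 \<le> a" "a \<le> S + 2" "\<bar>t\<bar> \<le> int (T v)" for a t
  proof (rule cyclic_seq_concat_replicate[OF W])
    have "a * length v \<le> (S + 2) * length v" using that(2) by (rule mult_le_mono1)
    moreover have "a \<le> a * length v" "S + 2 \<le> (S + 2) * length v"
      using mult_le_mono2[OF nv, of a] mult_le_mono2[OF nv, of "S + 2"] by simp_all
    moreover have "(2 * S + 4) * length v = 2 * ((S + 2) * length v)" by (simp add: algebra_simps)
    ultimately show "0 \<le> int (a * length v) + t" "int (a * length v) + t < int ((2 * S + 4) * length v)"
      using that \<open>T v \<le> S\<close> by linarith+
  qed
  define u where "u = length pre + (S + 1) * length v"
  define u' where "u' = length pre + (S + 2) * length v"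
  have "(S + 1) * length v < (S + 2) * length v" "(S + 2) * length v < (2 * S + 4) * length v"
    using nv by (intro mult_less_mono1; linarith)+
  moreover have "length (mimic_word T j) = length pre + (2 * S + 4) * length v + length rest"
    using W by simp
  ultimately have "u < u'" "u' < length (mimic_word T j)" unfolding u_def u'_def by linarith+
  moreover have "\<forall>t. \<bar>t\<bar> \<le> int (T v) \<longrightarrow>
      cyclic_seq (mimic_word T j) u t = cyclic_seq v 0 t \<and> cyclic_seq (mimic_word T j) u' t = cyclic_seq v 0 t"
    unfolding u_def u'_def using window[of "S + 1"] window[of "S + 2"] by simp
  ultimately show ?thesis unfolding v_def by (metis less_trans order_less_irrefl)
qed

lemma elects_leader_stops_at_Least:
  assumes "elects_leader A s G" "v \<in> verts G"
  shows "A s (aview G (LEAST r. A s (aview G r v) \<noteq> None) v) \<noteq> None"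
proof (rule LeastI_ex)
  show "\<exists>r. A s (aview G r v) \<noteq> None" using assms unfolding elects_leader_def by fastforce
qed

lemma aview_decorated_cycle_eq:
  assumes "3 \<le> length w" "3 \<le> length w'" "p < length w" "q < length w'"
    and "\<forall>t. \<bar>t\<bar> \<le> int R \<longrightarrow> cyclic_seq w p t = cyclic_seq w' q t"
  shows "aview (decorated_cycle w) R p = aview (decorated_cycle w') R q"
  using assms aview_decorated_cycle seq_view_cong[of R "cyclic_seq w p" "cyclic_seq w' q"] by simp

lemma mimic_word_cycle_lookalikes:
  assumes "i < j"
  obtains u u' where "u \<in> verts (decorated_cycle (mimic_word T j))"
    "u' \<in> verts (decorated_cycle (mimic_word T j))" "u \<noteq> u'"
    "\<And>r x. r \<le> T (mimic_word T i) \<Longrightarrow> x = u \<or> x = u' \<Longrightarrow>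
      aview (decorated_cycle (mimic_word T j)) r x = aview (decorated_cycle (mimic_word T i)) r 0"
proof -
  obtain u u' where u: "u < length (mimic_word T j)" "u' < length (mimic_word T j)" "u \<noteq> u'"
    and window: "\<forall>t. \<bar>t\<bar> \<le> int (T (mimic_word T i)) \<longrightarrow>
       cyclic_seq (mimic_word T j) u t = cyclic_seq (mimic_word T i) 0 t \<and>
       cyclic_seq (mimic_word T j) u' t = cyclic_seq (mimic_word T i) 0 t"
    using mimic_word_two_copies[OF assms] by blast
  have "aview (decorated_cycle (mimic_word T j)) r x = aview (decorated_cycle (mimic_word T i)) r 0"
    if r: "r \<le> T (mimic_word T i)" and x: "x = u \<or> x = u'" for r x
  proof (rule aview_decorated_cycle_eq[OF three_le_length_mimic_word three_le_length_mimic_word])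
    show "x < length (mimic_word T j)" using x u by blast
    show "0 < length (mimic_word T i)" using three_le_length_mimic_word[of T i] by linarith
    show "\<forall>t. \<bar>t\<bar> \<le> int r \<longrightarrow> cyclic_seq (mimic_word T j) x t = cyclic_seq (mimic_word T i) 0 t"
      using window x r by fastforce
  qed
  moreover have "u \<in> verts (decorated_cycle (mimic_word T j))" "u' \<in> verts (decorated_cycle (mimic_word T j))"
    using u by (simp_all add: verts_decorated_cycle)
  ultimately show ?thesis using that u(3) by blast
qed

lemma port_graph_mimic_word_cycle: "port_graph (decorated_cycle (mimic_word T k))"
  using port_graph_decorated_cycle three_le_length_mimic_word .

lemma feasible_mimic_word_cycle: "feasible (decorated_cycle (mimic_word T k))"
proof (rule feasible_decorated_cycle)
  show "3 \<le> length (mimic_word T k)" by (rule three_le_length_mimic_word)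
  then show "length (mimic_word T k) - 1 < length (mimic_word T k)" by simp
qed (rule mimic_word_eq_marker_iff)

lemma finite_range_repeats:
  fixes f :: "nat \<Rightarrow> 'a"
  assumes "finite (range f)"
  shows "\<exists>i j. i < j \<and> f i = f j"
proof -
  have "\<not> inj f" using assms finite_imageD infinite_UNIV_nat by blast
  then obtain i j where "i \<noteq> j" "f i = f j" unfolding inj_def by blast
  then show ?thesis by (metis linorder_neqE_nat)
qed

theorem proposition7:
  fixes b :: nat
  shows "\<not> (\<exists>(A :: algorithm) (oracle :: pgraph \<Rightarrow> bool list).
             \<forall>G. port_graph G \<and> feasible G \<longrightarrow>
                 length (oracle G) \<le> b \<and> elects_leader A (oracle G) G)"
proof (intro notI, elim exE)
  fix A :: algorithm and advice :: "pgraph \<Rightarrow> bool list"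
  assume H: "\<forall>G. port_graph G \<and> feasible G \<longrightarrow> length (advice G) \<le> b \<and> elects_leader A (advice G) G"
  define T where "T w = (LEAST r. A (advice (decorated_cycle w)) (aview (decorated_cycle w) r 0) \<noteq> None)"
    for w
  define G where "G k = decorated_cycle (mimic_word T k)" for k
  have G: "port_graph (G k)" "length (advice (G k)) \<le> b" "elects_leader A (advice (G k)) (G k)" for k
    using H port_graph_mimic_word_cycle feasible_mimic_word_cycle unfolding G_def by blast+
  have "range (advice \<circ> G) \<subseteq> {xs. set xs \<subseteq> UNIV \<and> length xs \<le> b}" using G(2) by auto
  then obtain i j where "i < j" and s: "advice (G i) = advice (G j)"
    using finite_range_repeats[of "advice \<circ> G"] finite_lists_length_le[of UNIV b]
    by (metis (no_types) comp_apply finite_UNIV finite_subset)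
  obtain u u' where u: "u \<in> verts (G j)" "u' \<in> verts (G j)" "u \<noteq> u'"
    and views: "\<And>r x. r \<le> T (mimic_word T i) \<Longrightarrow> x = u \<or> x = u' \<Longrightarrow> aview (G j) r x = aview (G i) r 0"
    using mimic_word_cycle_lookalikes[OF \<open>i < j\<close>] unfolding G_def by metis
  have "0 \<in> verts (G i)" using three_le_length_mimic_word[of T i] by (auto simp: G_def verts_decorated_cycle)
  then have "A (advice (G i)) (aview (G i) (T (mimic_word T i)) 0) \<noteq> None"
    using elects_leader_stops_at_Least[OF G(3)] unfolding T_def[of "mimic_word T i"] G_def by blast
  then show False
    using elects_leader_indistinguishable[OF G(1,3) u(1,2), of "T (mimic_word T i)"] views s u(3)
    by simp
qed

end
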